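(* Let $f_1:\mathbb{R}^m\to(-\infty,+\infty]$ be proper convex lower semi-continuous and let $B\in\mathbb{R}^{m\times d}$ have full row rank. Let $f_2(x)=l(x)+\frac{\nu}{2}\|x\|_2^2$ with $l(x)=\frac1n\sum_{i=1}^n\phi_i(x)$, $\nu>0$, each $\phi_i:\mathbb{R}^d\to\mathbb{R}$ smooth and convex, and the $\nabla\phi_i$ uniformly bounded on $\mathbb{R}^d$. Let $M$ be a constant with $4\big(\sup_{i,x}\|\nabla l^{[i]}(x)\|_2^2+\|\nabla l(x^* )\|_2^2\big)\le M$. Let $x^*$ be a minimizer of $f_1(Bx)+f_2(x)$ and $v^*\in\mathbb{R}^m$ such that for every $k$, with $h_k(x)=\frac{\lambda}{\gamma_k}f_1(\frac{\gamma_k}{\lambda}x)$, $$v^*=(I-\mathrm{Prox}_{h_k})\Big(\tfrac{\lambda}{\gamma_k}B\big(x^*-\gamma_k\nabla f_2(x^* )\big)+(I-\lambda BB^T)v^*\Big),\qquad x^*=x^*-\gamma_k\nabla f_2(x^* )-\gamma_kB^Tv^*.$$ Let $(x_k,v_k)$ be generated by Algorithm 1 (described in the context) with $c>0$, $\alpha\in(0,1]$, $0<\lambda<1/\rho_{\max}(BB^T)$, and let $k_0>0$ be an integer such that $\gamma_{k_0}\le\min\{\frac{1}{2\nu},\frac{\lambda\rho_{\min}(BB^T)}{\nu}\}$. Setting $a_k=\mathbb{E}^{(k)}\big(\|x_k-x^*\|_2^2+\frac{\gamma_k^2}{\lambda}\|v_k-v^*\|_2^2\big)$, we have $$a_{k+1}\le(1-\nu\gamma_k)a_k+\gamma_k^2M\qquad\forall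 k\ge k_0.$$
   Context: $\mathrm{Prox}_f(y)=\arg\min_x\{f(x)+\frac12\|x-y\|_2^2\}$; $\rho_{\max}(BB^T),\rho_{\min}(BB^T)$ are the largest and smallest eigenvalues of $BB^T$. Fix a batch size $p$ dividing $n$; for $i\in\{1,\dots,n/p\}$, $\nabla l^{[i]}(x)=\frac1p\sum_{j=(i-1)p+1}^{ip}\nabla\phi_j(x)$ and $\nabla f_2^{[i]}(x)=\nabla l^{[i]}(x)+\nu x$. Algorithm 1: choose $x_1\in\mathbb{R}^d$, $v_1\in\mathbb{R}^m$; for $k=1,2,\dots$: $\gamma_k=c/k^\alpha$; draw $i_k$ from $\{1,\dots,n/p\}$, each with probability $p/n$, independently of the past; $x_{k+1/2}=x_k-\gamma_k\nabla f_2^{[i_k]}(x_k)$; $v_{k+1}=\frac{\lambda}{\gamma_k}\big(I-\mathrm{Prox}_{\frac{\gamma_k}{\lambda}f_1}\big)\big(Bx_{k+1/2}+(I-\lambda BB^T)\frac{\gamma_k}{\lambda}v_k\big)$; $x_{k+1}=x_{k+1/2}-\gamma_kB^Tv_{k+1}$. $\mathbb{E}^{(k)}$ denotes expectation with respect to all random indices drawn up to the $k$-th iterate. *)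

theory Defs
  imports "HOL-Analysis.Analysis" "HOL-Probability.Probability"
begin

definition proper_fun :: "('a \<Rightarrow> ereal) \<Rightarrow> bool" where
  "proper_fun f \<longleftrightarrow> (\<exists>x. f x < \<infinity>) \<and> (\<forall>x. f x > -\<infinity>)"

definition ereal_convex :: "('a::real_vector \<Rightarrow> ereal) \<Rightarrow> bool" where
  "ereal_convex f \<longleftrightarrow>
     (\<forall>x y u. 0 < u \<and> u < 1 \<longrightarrow>
        f (u *\<^sub>R x + (1 - u) *\<^sub>R y) \<le> ereal u * f x + ereal (1 - u) * f y)"

definition lsc :: "('a::topological_space \<Rightarrow> ereal) \<Rightarrow> bool" where
  "lsc f \<longleftrightarrow> (\<forall>x. f x \<le> Liminf (at x) f)"

definition prox :: "('a::real_normed_vector \<Rightarrow> ereal) \<Rightarrow> 'a \<Rightarrow> 'a" where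
  "prox f y = (THE x. \<forall>z. f x + ereal (norm (x - y)^2 / 2) \<le> f z + ereal (norm (z - y)^2 / 2))"

definition eigvals :: "real^'n^'n \<Rightarrow> real set" where
  "eigvals A = {\<mu>. \<exists>x. x \<noteq> 0 \<and> A *v x = \<mu> *\<^sub>R x}"

definition rho_max :: "real^'n^'n \<Rightarrow> real" where
  "rho_max A = Max (eigvals A)"

definition rho_min :: "real^'n^'n \<Rightarrow> real" where
  "rho_min A = Min (eigvals A)"

text \<open>gphi j is the gradient of phi_j (j = 1..n).\<close>
definition grad_l :: "(nat \<Rightarrow> real^'d \<Rightarrow> real^'d) \<Rightarrow> nat \<Rightarrow> real^'d \<Rightarrow> real^'d" where
  "grad_l gphi n x = (1 / real n) *\<^sub>R (\<Sum>j=1..n. gphi j x)"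

definition grad_l_batch :: "(nat \<Rightarrow> real^'d \<Rightarrow> real^'d) \<Rightarrow> nat \<Rightarrow> nat \<Rightarrow> real^'d \<Rightarrow> real^'d" where
  "grad_l_batch gphi p i x = (1 / real p) *\<^sub>R (\<Sum>j=(i-1)*p+1..i*p. gphi j x)"

definition gamma :: "real \<Rightarrow> real \<Rightarrow> nat \<Rightarrow> real" where
  "gamma c \<alpha> k = c / (real k powr \<alpha>)"

definition alg1_step ::
  "(real^'m \<Rightarrow> ereal) \<Rightarrow> real^'d^'m \<Rightarrow> (nat \<Rightarrow> real^'d \<Rightarrow> real^'d) \<Rightarrow> nat \<Rightarrow> real \<Rightarrow> real
   \<Rightarrow> real \<Rightarrow> real \<Rightarrow> nat \<Rightarrow> nat \<Rightarrow> (real^'d) \<times> (real^'m) \<Rightarrow> (real^'d) \<times> (real^'m)" where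
  "alg1_step f1 B gphi p \<nu> lam c \<alpha> k i xv =
     (let x = fst xv; v = snd xv; \<gamma> = gamma c \<alpha> k;
          xh = x - \<gamma> *\<^sub>R (grad_l_batch gphi p i x + \<nu> *\<^sub>R x);
          u = B *v xh + (mat 1 - lam *\<^sub>R (B ** transpose B)) *v ((\<gamma> / lam) *\<^sub>R v);
          v' = (lam / \<gamma>) *\<^sub>R (u - prox (\<lambda>z. ereal (\<gamma> / lam) * f1 z) u);
          x' = xh - \<gamma> *\<^sub>R (transpose B *v v')
      in (x', v'))"

text \<open>alg1 ... idx k = (x_k, v_k) for k \<ge> 1; idx k is the index i_k drawn at iteration k.\<close>
fun alg1 ::
  "(real^'m \<Rightarrow> ereal) \<Rightarrow> real^'d^'m \<Rightarrow> (nat \<Rightarrow> real^'d \<Rightarrow> real^'d) \<Rightarrow> nat \<Rightarrow> real \<Rightarrow> real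
   \<Rightarrow> real \<Rightarrow> real \<Rightarrow> real^'d \<Rightarrow> real^'m \<Rightarrow> (nat \<Rightarrow> nat) \<Rightarrow> nat \<Rightarrow> (real^'d) \<times> (real^'m)" where
  "alg1 f1 B gphi p \<nu> lam c \<alpha> x1 v1 idx 0 = (x1, v1)"
| "alg1 f1 B gphi p \<nu> lam c \<alpha> x1 v1 idx (Suc 0) = (x1, v1)"
| "alg1 f1 B gphi p \<nu> lam c \<alpha> x1 v1 idx (Suc (Suc k)) =
     alg1_step f1 B gphi p \<nu> lam c \<alpha> (Suc k) (idx (Suc k)) (alg1 f1 B gphi p \<nu> lam c \<alpha> x1 v1 idx (Suc k))"

end

theory Submission
  imports Defs
begin

(* Write e = x_k - xs, d = v_k - vs and gamma = gamma_k. The dual update and the fixed-point equation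
   for vs are proximal residuals of two rescalings of f1 whose arguments are related by scaling, so
   monotonicity of the subdifferential of f1 (via the variational inequality of the proximal map) gives
     |x_{k+1} - xs|^2 + gamma^2/lam |v_{k+1} - vs|^2
       <= |x_{k+1/2} - (xs - gamma grad f2(xs))|^2 + gamma^2/lam (|d|^2 - lam |B^T d|^2);
   this needs lam rho_max(B B^T) < 1. Since |B^T d|^2 >= rho_min |d|^2 and nu gamma <= lam rho_min,
   the dual term is at most (1 - nu gamma) gamma^2/lam |d|^2. Averaging the primal term over the
   uniformly drawn batch turns the stochastic gradient into the full one; strong monotonicity of
   grad f2 and the bound M on squared stochastic gradients then give (1 - nu gamma)|e|^2 + gamma^2 M
   once gamma nu <= 1/2. As gamma_{k+1} <= gamma_k, this bounds the average of the potential at step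
   k+1 over the next index, and since the indices are independent and uniform, the expectation is an
   average over all index sequences, so the pointwise bound integrates to the claim. *)

lemma power2_norm_add:
  fixes x y :: "'a::real_inner"
  shows "norm (x + y)^2 = norm x^2 + 2 * inner x y + norm y^2"
  by (simp add: power2_norm_eq_inner inner_add_left inner_add_right inner_commute algebra_simps)

lemma power2_norm_diff:
  fixes x y :: "'a::real_inner"
  shows "norm (x - y)^2 = norm x^2 - 2 * inner x y + norm y^2"
  by (simp add: power2_norm_eq_inner inner_diff_left inner_diff_right inner_commute algebra_simps)

lemma power2_norm_add_le:
  fixes x y :: "'a::real_inner"
  shows "norm (x + y)^2 \<le> 2 * norm x^2 + 2 * norm y^2"
  using power2_norm_add[of x y] power2_norm_diff[of x y] zero_le_power2[of "norm (x - y)"] by linarith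

lemma power2_norm_midpoint:
  fixes x y :: "'a::real_inner"
  shows "norm ((1/2) *\<^sub>R (x + y))^2 = (norm x^2 + norm y^2) / 2 - norm (x - y)^2 / 4"
  using power2_norm_add[of x y] power2_norm_diff[of x y] by (simp add: power2_eq_square divide_simps)

section \<open>Lower semicontinuity and proximal maps\<close>

lemma proper_funD:
  assumes "proper_fun g"
  shows "\<And>x. g x > -\<infinity>" and "\<exists>x. g x < \<infinity>"
  using assms unfolding proper_fun_def by auto

lemma lsc_iff_eventually:
  "lsc f \<longleftrightarrow> (\<forall>x c. c < f x \<longrightarrow> eventually (\<lambda>y. c < f y) (at x))"
  unfolding lsc_def le_Liminf_iff by blast

lemma lsc_attains_min:
  fixes F :: "'a::topological_space \<Rightarrow> ereal"
  assumes K: "compact K" "K \<noteq> {}" and F: "lsc F"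
  shows "\<exists>p\<in>K. \<forall>z\<in>K. F p \<le> F z"
proof (rule ccontr)
  assume "\<not> ?thesis"
  then have "\<forall>p\<in>K. \<exists>z r. z \<in> K \<and> F z < ereal r \<and> ereal r < F p"
    by (meson ereal_dense2 not_le)
  then obtain z r where zr: "\<And>p. p \<in> K \<Longrightarrow> z p \<in> K \<and> F (z p) < ereal (r p) \<and> ereal (r p) < F p"
    by metis
  have "\<forall>p\<in>K. \<exists>U. open U \<and> p \<in> U \<and> (\<forall>y\<in>U. ereal (r p) < F y)"
  proof
    fix p assume p: "p \<in> K"
    have "eventually (\<lambda>y. ereal (r p) < F y) (at p)"
      using F zr[OF p] unfolding lsc_iff_eventually by blast
    then obtain U where "open U" "p \<in> U" "\<And>y. y \<in> U \<Longrightarrow> y \<noteq> p \<Longrightarrow> ereal (r p) < F y"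
      unfolding eventually_at_topological by blast
    then show "\<exists>U. open U \<and> p \<in> U \<and> (\<forall>y\<in>U. ereal (r p) < F y)"
      using zr[OF p] by (intro exI[of _ U]) auto
  qed
  then obtain U where U: "\<And>p. p \<in> K \<Longrightarrow> open (U p) \<and> p \<in> U p \<and> (\<forall>y\<in>U p. ereal (r p) < F y)"
    by metis
  moreover have "K \<subseteq> (\<Union>p\<in>K. U p)" using U by blast
  ultimately obtain D where D: "D \<subseteq> K" "finite D" "K \<subseteq> (\<Union>p\<in>D. U p)"
    using compactE_image[OF K(1), of K U] U by metis
  then have "D \<noteq> {}" using K(2) by auto
  then obtain p0 where p0: "p0 \<in> D" "\<And>p. p \<in> D \<Longrightarrow> r p0 \<le> r p"
    using D(2) by (metis (no_types, lifting) arg_min_if_finite(1) arg_min_least)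
  \<comment> \<open>z p0 is covered by some U p' with p' \<in> D, forcing r p' < F (z p0) < r p0 \<le> r p'.\<close>
  obtain p' where p': "p' \<in> D" "z p0 \<in> U p'" using D zr p0 by blast
  have "ereal (r p') < F (z p0)" "F (z p0) < ereal (r p0)" using U zr p' p0 D by auto
  then have "ereal (r p') < ereal (r p0)" by (rule less_trans)
  then show False using p0(2)[OF p'(1)] by simp
qed

lemma lsc_add_continuous:
  fixes g :: "'a::topological_space \<Rightarrow> ereal"
  assumes g: "lsc g" and ninf: "\<And>x. g x > -\<infinity>" and h: "continuous_on UNIV h"
  shows "lsc (\<lambda>z. g z + ereal (h z))"
  unfolding lsc_iff_eventually
proof (intro allI impI)
  fix x c
  assume c: "c < g x + ereal (h x)"
  have ht: "(h \<longlongrightarrow> h x) (at x)" using h by (simp add: continuous_on_def)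
  show "eventually (\<lambda>y. c < g y + ereal (h y)) (at x)"
  proof (cases c)
    case MInf
    have "-\<infinity> < g y + ereal (h y)" for y using ninf[of y] by (cases "g y") auto
    then show ?thesis using MInf by simp
  next
    case PInf then show ?thesis using c by simp
  next
    case (real r)
    obtain \<delta> where \<delta>: "\<delta> > 0" "ereal (r - h x + \<delta>) < g x"
    proof (cases "g x")
      case (real t)
      then have "r < t + h x" using c \<open>c = ereal r\<close> by simp
      then show ?thesis using real by (intro that[of "(t + h x - r) / 2"]) (auto simp: field_simps)
    next
      case PInf then show ?thesis by (intro that[of 1]) auto
    next
      case MInf then show ?thesis using ninf[of x] by simp
    qed
    have "eventually (\<lambda>y. ereal (r - h x + \<delta>) < g y) (at x)"
      using g \<delta> unfolding lsc_iff_eventually by blast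
    moreover have "eventually (\<lambda>y. h x - \<delta> < h y) (at x)"
      using order_tendstoD(1)[OF ht, of "h x - \<delta>"] \<delta> by simp
    ultimately show ?thesis
    proof eventually_elim
      case (elim y)
      then show ?case using ninf[of y] \<open>c = ereal r\<close> by (cases "g y") auto
    qed
  qed
qed

lemma convex_lsc_linear_minorant:
  fixes g :: "'a::euclidean_space \<Rightarrow> ereal"
  assumes pr: "proper_fun g" and cv: "ereal_convex g" and ls: "lsc g"
  obtains x0 a L where "g x0 = ereal a" "L \<ge> 0" "\<And>y. ereal (a - L * (1 + norm (y - x0))) \<le> g y"
proof -
  note ninf = proper_funD(1)[OF pr]
  obtain x0 where "g x0 < \<infinity>" using proper_funD(2)[OF pr] by blast
  then obtain a where a: "g x0 = ereal a" using ninf[of x0] by (cases "g x0") auto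
  obtain p1 where p1: "\<And>z. z \<in> cball x0 1 \<Longrightarrow> g p1 \<le> g z"
    using lsc_attains_min[OF compact_cball _ ls, of x0 1] by (auto simp del: mem_cball)
  then have "g p1 \<le> g x0" by simp
  then obtain m where m: "g p1 = ereal m" "m \<le> a" using ninf[of p1] a by (cases "g p1") auto
  define L where "L = a - m"
  \<comment> \<open>Points outside the unit ball are controlled through convexity along the segment to x0.\<close>
  have "ereal (a - L * (1 + norm (y - x0))) \<le> g y" for y
  proof (cases "norm (y - x0) \<le> 1")
    case True
    then have "g p1 \<le> g y" using p1[of y] by (simp add: dist_norm norm_minus_commute)
    moreover have "a - L * (1 + norm (y - x0)) \<le> m"
      unfolding L_def using m(2) by (simp add: algebra_simps mult_right_mono)
    ultimately show ?thesis using m(1) by (metis ereal_less_eq(3) order_trans)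
  next
    case False
    define r where "r = norm (y - x0)"
    show ?thesis
    proof (cases "g y")
      case (real t)
      define u where "u = 1 / r"
      have r1: "r > 1" using False unfolding r_def by simp
      have u01: "0 < u" "u < 1" using r1 unfolding u_def by auto
      have "norm ((u *\<^sub>R y + (1 - u) *\<^sub>R x0) - x0) = 1"
        using u01 r1 unfolding u_def r_def by (simp add: algebra_simps flip: scaleR_diff_right)
      then have "ereal m \<le> g (u *\<^sub>R y + (1 - u) *\<^sub>R x0)"
        using p1 m by (metis dist_norm mem_cball norm_minus_commute order_refl)
      also have "\<dots> \<le> ereal u * g y + ereal (1 - u) * g x0"
        using cv u01 unfolding ereal_convex_def by blast
      also have "\<dots> = ereal (u * t + (1 - u) * a)" using real a by simp
      finally have "r * m \<le> r * (u * t + (1 - u) * a)" using r1 by (simp add: mult_left_mono)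
      also have "\<dots> = t + (r - 1) * a" using r1 unfolding u_def by (simp add: field_simps)
      finally have "a - L * (1 + r) \<le> t" unfolding L_def using m(2) by (simp add: algebra_simps)
      then show ?thesis using real r_def by simp
    qed (use ninf[of y] in auto)
  qed
  moreover have "L \<ge> 0" unfolding L_def using m(2) by simp
  ultimately show ?thesis using that a by blast
qed

lemma prox_exists:
  fixes g :: "'a::euclidean_space \<Rightarrow> ereal"
  assumes pr: "proper_fun g" and cv: "ereal_convex g" and ls: "lsc g"
  shows "\<exists>p. \<forall>z. g p + ereal (norm (p - w)^2 / 2) \<le> g z + ereal (norm (z - w)^2 / 2)"
proof -
  define F where "F z = g z + ereal (norm (z - w)^2 / 2)" for z
  obtain x0 a L where a: "g x0 = ereal a" and L: "L \<ge> 0"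
    and lower: "\<And>y. ereal (a - L * (1 + norm (y - x0))) \<le> g y"
    using convex_lsc_linear_minorant[OF pr cv ls] by blast
  define d where "d = norm (x0 - w)"
  define R where "R = 2 * (d + L) + 2"
  have "lsc F" unfolding F_def
    by (rule lsc_add_continuous[OF ls proper_funD(1)[OF pr]]) (auto intro!: continuous_intros)
  moreover have "x0 \<in> cball x0 R" unfolding R_def d_def using L by simp
  ultimately obtain p where p: "\<And>z. z \<in> cball x0 R \<Longrightarrow> F p \<le> F z"
    using lsc_attains_min[OF compact_cball, of x0 R F] by (auto simp del: mem_cball)
  \<comment> \<open>Outside cball x0 R the quadratic term beats the linear minorant, so F exceeds F x0 there.\<close>
  have "F p \<le> F z" for z
  proof (cases "z \<in> cball x0 R")
    case False
    define r where "r = norm (z - x0)"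
    have d0: "d \<ge> 0" unfolding d_def by simp
    have rR: "r > R" using False unfolding r_def by (simp add: dist_norm norm_minus_commute)
    have "r - d \<le> norm (z - w)" unfolding r_def d_def using norm_triangle_ineq4[of "z - w" "x0 - w"]
      by (simp add: algebra_simps)
    moreover have "r - d \<ge> 0" using rR L d0 unfolding R_def by argo
    ultimately have sq: "(r - d)^2 \<le> norm (z - w)^2" by (simp add: power_mono)
    have "r * 1 < r * (r / 2 - d - L)" using rR L d0 unfolding R_def
      by (intro mult_strict_left_mono) auto
    then have key: "a + d^2/2 < a - L * (1 + r) + (r - d)^2 / 2"
      using rR L d0 unfolding R_def by (simp add: power2_eq_square algebra_simps)
    have "F p \<le> F x0" using p[of x0] L unfolding R_def d_def by simp
    also have "F x0 = ereal (a + d^2/2)" unfolding F_def d_def using a by simp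
    also have "\<dots> \<le> ereal (a - L * (1 + r)) + ereal (norm (z - w)^2 / 2)"
      using key sq by simp
    also have "\<dots> \<le> F z" unfolding F_def using lower[of z] r_def by (intro add_mono) auto
    finally show ?thesis .
  qed (use p in auto)
  then show ?thesis unfolding F_def by blast
qed

lemma prox_unique:
  fixes g :: "'a::real_inner \<Rightarrow> ereal"
  assumes pr: "proper_fun g" and cv: "ereal_convex g"
    and p: "\<And>z. g p + ereal (norm (p - w)^2 / 2) \<le> g z + ereal (norm (z - w)^2 / 2)"
    and q: "\<And>z. g q + ereal (norm (q - w)^2 / 2) \<le> g z + ereal (norm (z - w)^2 / 2)"
  shows "p = q"
proof -
  note ninf = proper_funD(1)[OF pr]
  obtain x0 where x0: "g x0 < \<infinity>" using proper_funD(2)[OF pr] by blast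
  have fin: "g y \<noteq> \<infinity>"
    if "\<And>z. g y + ereal (norm (y - w)^2 / 2) \<le> g z + ereal (norm (z - w)^2 / 2)" for y
    using that[of x0] x0 by (cases "g x0") auto
  obtain a where a: "g p = ereal a" using fin[OF p] ninf[of p] by (cases "g p") auto
  obtain b where b: "g q = ereal b" using fin[OF q] ninf[of q] by (cases "g q") auto
  have eq: "a + norm (p - w)^2 / 2 = b + norm (q - w)^2 / 2"
    using p[of q] q[of p] a b by simp
  \<comment> \<open>The objective is strongly convex, so the midpoint of two minimisers would do strictly better.\<close>
  define c where "c = (1/2) *\<^sub>R p + (1 - 1/2) *\<^sub>R q"
  have "g c \<le> ereal (1/2) * g p + ereal (1 - 1/2) * g q"
    using cv unfolding ereal_convex_def c_def by (metis field_sum_of_halves less_add_same_cancel1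
        zero_less_divide_1_iff zero_less_numeral)
  also have "\<dots> = ereal ((a + b) / 2)" using a b by (simp add: field_simps)
  finally have gc: "g c \<le> ereal ((a + b) / 2)" .
  have cw: "c - w = (1/2) *\<^sub>R ((p - w) + (q - w))" unfolding c_def
    by (simp add: algebra_simps flip: scaleR_add_left)
  have nc: "norm (c - w)^2 = (norm (p - w)^2 + norm (q - w)^2) / 2 - norm (p - q)^2 / 4"
    unfolding cw power2_norm_midpoint by simp
  have "g p + ereal (norm (p - w)^2 / 2) \<le> ereal ((a + b) / 2) + ereal (norm (c - w)^2 / 2)"
    using p[of c] gc by (meson add_right_mono order_trans)
  then have "a + norm (p - w)^2 / 2 \<le> (a + b) / 2 + norm (c - w)^2 / 2" using a by simp
  then have "norm (p - q)^2 \<le> 0" using eq nc by argo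
  then show ?thesis by simp
qed

lemma prox_minimizes:
  fixes g :: "'a::euclidean_space \<Rightarrow> ereal"
  assumes "proper_fun g" "ereal_convex g" "lsc g"
  shows "g (prox g w) + ereal (norm (prox g w - w)^2 / 2) \<le> g z + ereal (norm (z - w)^2 / 2)"
proof -
  have "\<exists>!p. \<forall>z. g p + ereal (norm (p - w)^2 / 2) \<le> g z + ereal (norm (z - w)^2 / 2)"
    using prox_exists[OF assms] prox_unique[OF assms(1,2)] by blast
  then show ?thesis unfolding prox_def by (rule theI'[THEN spec])
qed

lemma prox_finite:
  fixes g :: "'a::euclidean_space \<Rightarrow> ereal"
  assumes "proper_fun g" "ereal_convex g" "lsc g"
  shows "g (prox g w) = ereal (real_of_ereal (g (prox g w)))"
proof -
  obtain x0 where x0: "g x0 < \<infinity>" using proper_funD(2)[OF assms(1)] by blast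
  then have "g (prox g w) \<noteq> \<infinity>"
    using prox_minimizes[OF assms, of w x0] by (cases "g x0") auto
  then show ?thesis using proper_funD(1)[OF assms(1), of "prox g w"] by (cases "g (prox g w)") auto
qed

lemma prox_variational_inequality:
  fixes g :: "'a::euclidean_space \<Rightarrow> ereal"
  assumes pr: "proper_fun g" and cv: "ereal_convex g" and ls: "lsc g" and b: "g z = ereal b"
  shows "inner (w - prox g w) (z - prox g w) \<le> b - real_of_ereal (g (prox g w))"
proof -
  define p where "p = prox g w"
  define a where "a = real_of_ereal (g p)"
  have a: "g p = ereal a" unfolding a_def p_def by (rule prox_finite[OF pr cv ls])
  \<comment> \<open>Compare p with the points p + t (z - p) of the segment and let t tend to 0.\<close>
  have "inner (w - p) (z - p) \<le> b - a + t * (norm (z - p)^2 / 2)" if t: "0 < t" "t < 1" for t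
  proof -
    define zt where "zt = t *\<^sub>R z + (1 - t) *\<^sub>R p"
    have "g zt \<le> ereal t * g z + ereal (1 - t) * g p"
      using cv t unfolding ereal_convex_def zt_def by blast
    then have "g zt \<le> ereal (t * b + (1 - t) * a)" using a b by simp
    then have "g p + ereal (norm (p - w)^2 / 2) \<le> ereal (t * b + (1 - t) * a) + ereal (norm (zt - w)^2 / 2)"
      using prox_minimizes[OF pr cv ls, of w zt] unfolding p_def by (meson add_right_mono order_trans)
    then have ineq: "a + norm (p - w)^2 / 2 \<le> t * b + (1 - t) * a + norm (zt - w)^2 / 2" using a by simp
    have ztw: "zt - w = (p - w) + t *\<^sub>R (z - p)" unfolding zt_def by (simp add: algebra_simps)
    have "norm (zt - w)^2 = norm (p - w)^2 + 2 * t * inner (p - w) (z - p) + t^2 * norm (z - p)^2"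
      unfolding ztw power2_norm_add by (simp add: power_mult_distrib)
    with ineq have "t * a \<le> t * (b + inner (p - w) (z - p) + t * norm (z - p)^2 / 2)"
      by (simp add: algebra_simps power2_eq_square)
    then have "a \<le> b + inner (p - w) (z - p) + t * norm (z - p)^2 / 2"
      using t by (simp only: mult_le_cancel_left_pos)
    moreover have "inner (w - p) (z - p) = - inner (p - w) (z - p)" by (simp add: inner_diff_left)
    ultimately show ?thesis by simp
  qed
  moreover have "((\<lambda>t. b - a + t * (norm (z - p)^2 / 2)) \<longlongrightarrow> b - a) (at_right 0)"
    by (auto intro!: tendsto_eq_intros)
  ultimately have "inner (w - p) (z - p) \<le> b - a"
    by (intro tendsto_lowerbound) (auto simp: eventually_at_right_field intro!: exI[of _ 1])
  then show ?thesis unfolding a_def p_def .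
qed

lemma proper_fun_scaled:
  fixes f :: "'a::real_vector \<Rightarrow> ereal"
  assumes pr: "proper_fun f" and a: "a > 0" and b: "b \<noteq> 0"
  shows "proper_fun (\<lambda>z. ereal a * f (b *\<^sub>R z))"
proof -
  obtain x where x: "f x < \<infinity>" using proper_funD(2)[OF pr] by blast
  have "b *\<^sub>R ((1 / b) *\<^sub>R x) = x" using b by simp
  then have "ereal a * f (b *\<^sub>R ((1 / b) *\<^sub>R x)) < \<infinity>" using x a by (cases "f x") auto
  moreover have "ereal a * f (b *\<^sub>R z) > -\<infinity>" for z
    using proper_funD(1)[OF pr, of "b *\<^sub>R z"] a by (cases "f (b *\<^sub>R z)") auto
  ultimately show ?thesis unfolding proper_fun_def by blast
qed

lemma ereal_convex_scaled:
  fixes f :: "'a::real_vector \<Rightarrow> ereal"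
  assumes pr: "proper_fun f" and cv: "ereal_convex f" and a: "a > 0"
  shows "ereal_convex (\<lambda>z. ereal a * f (b *\<^sub>R z))"
  unfolding ereal_convex_def
proof (intro allI impI)
  fix x y :: 'a and u :: real assume u: "0 < u \<and> u < 1"
  have "b *\<^sub>R (u *\<^sub>R x + (1 - u) *\<^sub>R y) = u *\<^sub>R (b *\<^sub>R x) + (1 - u) *\<^sub>R (b *\<^sub>R y)"
    by (simp add: algebra_simps)
  then have "f (b *\<^sub>R (u *\<^sub>R x + (1 - u) *\<^sub>R y)) \<le> ereal u * f (b *\<^sub>R x) + ereal (1 - u) * f (b *\<^sub>R y)"
    using cv u unfolding ereal_convex_def by presburger
  then have "ereal a * f (b *\<^sub>R (u *\<^sub>R x + (1 - u) *\<^sub>R y))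
      \<le> ereal a * (ereal u * f (b *\<^sub>R x) + ereal (1 - u) * f (b *\<^sub>R y))"
    using a by (intro ereal_mult_left_mono) auto
  also have "\<dots> = ereal u * (ereal a * f (b *\<^sub>R x)) + ereal (1 - u) * (ereal a * f (b *\<^sub>R y))"
    using proper_funD(1)[OF pr, of "b *\<^sub>R x"] proper_funD(1)[OF pr, of "b *\<^sub>R y"] a u
    by (cases "f (b *\<^sub>R x)"; cases "f (b *\<^sub>R y)") (auto simp: algebra_simps)
  finally show "ereal a * f (b *\<^sub>R (u *\<^sub>R x + (1 - u) *\<^sub>R y))
      \<le> ereal u * (ereal a * f (b *\<^sub>R x)) + ereal (1 - u) * (ereal a * f (b *\<^sub>R y))" .
qed

lemma lsc_scaled:
  fixes f :: "'a::real_normed_vector \<Rightarrow> ereal"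
  assumes pr: "proper_fun f" and ls: "lsc f" and a: "a > 0" and b: "b \<noteq> 0"
  shows "lsc (\<lambda>z. ereal a * f (b *\<^sub>R z))"
  unfolding lsc_iff_eventually
proof (intro allI impI)
  fix x :: 'a and c assume c: "c < ereal a * f (b *\<^sub>R x)"
  note ninf = proper_funD(1)[OF pr]
  have fl: "filterlim (\<lambda>y. b *\<^sub>R y) (at (b *\<^sub>R x)) (at x)"
    unfolding filterlim_at using b by (auto simp: eventually_at_filter intro!: tendsto_intros)
  show "eventually (\<lambda>y. c < ereal a * f (b *\<^sub>R y)) (at x)"
  proof (cases c)
    case MInf
    have "-\<infinity> < ereal a * f (b *\<^sub>R y)" for y using ninf[of "b *\<^sub>R y"] a by (cases "f (b *\<^sub>R y)") auto
    then show ?thesis using MInf by simp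
  next
    case PInf then show ?thesis using c by simp
  next
    case (real r)
    have "ereal (r / a) < f (b *\<^sub>R x)"
      using c real a ninf[of "b *\<^sub>R x"] by (cases "f (b *\<^sub>R x)") (auto simp: field_simps)
    then have "eventually (\<lambda>z. ereal (r / a) < f z) (at (b *\<^sub>R x))"
      using ls unfolding lsc_iff_eventually by blast
    then have "eventually (\<lambda>y. ereal (r / a) < f (b *\<^sub>R y)) (at x)"
      using fl unfolding filterlim_iff by blast
    then show ?thesis
    proof eventually_elim
      case (elim y)
      then show ?case using real a by (cases "f (b *\<^sub>R y)") (auto simp: field_simps)
    qed
  qed
qed

lemma prox_scaled_subgradient:
  fixes f :: "'a::euclidean_space \<Rightarrow> ereal" and w :: 'a
  assumes pr: "proper_fun f" and cv: "ereal_convex f" and ls: "lsc f" and c: "c > 0" and b: "b > 0"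
  defines "p \<equiv> prox (\<lambda>y. ereal c * f (b *\<^sub>R y)) w"
  shows "f (b *\<^sub>R p) = ereal (real_of_ereal (f (b *\<^sub>R p)))"
    and "f z = ereal t \<Longrightarrow> inner ((1 / (b * c)) *\<^sub>R (w - p)) (z - b *\<^sub>R p) \<le> t - real_of_ereal (f (b *\<^sub>R p))"
proof -
  define g where "g y = ereal c * f (b *\<^sub>R y)" for y
  have g: "proper_fun g" "ereal_convex g" "lsc g"
    unfolding g_def using proper_fun_scaled[OF pr c] ereal_convex_scaled[OF pr cv c] lsc_scaled[OF pr ls c] b
    by auto
  have "g p = ereal (real_of_ereal (g p))" unfolding p_def g_def[abs_def, symmetric] by (rule prox_finite[OF g])
  then show fin: "f (b *\<^sub>R p) = ereal (real_of_ereal (f (b *\<^sub>R p)))"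
    using c unfolding g_def by (cases "f (b *\<^sub>R p)") auto
  assume "f z = ereal t"
  then have "g ((1 / b) *\<^sub>R z) = ereal (c * t)" unfolding g_def using b by simp
  moreover have "real_of_ereal (g p) = c * real_of_ereal (f (b *\<^sub>R p))" unfolding g_def by (subst fin) simp
  ultimately have "inner (w - p) ((1 / b) *\<^sub>R z - p) \<le> c * t - c * real_of_ereal (f (b *\<^sub>R p))"
    using prox_variational_inequality[OF g, of "(1 / b) *\<^sub>R z" "c * t" w]
    unfolding p_def g_def[abs_def, symmetric] by simp
  moreover have "inner (w - p) ((1 / b) *\<^sub>R z - p) = c * inner ((1 / (b * c)) *\<^sub>R (w - p)) (z - b *\<^sub>R p)"
    using b c by (simp add: inner_diff_left inner_diff_right field_simps)
  ultimately have "c * inner ((1 / (b * c)) *\<^sub>R (w - p)) (z - b *\<^sub>R p) \<le> c * (t - real_of_ereal (f (b *\<^sub>R p)))"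
    by (simp add: right_diff_distrib)
  then show "inner ((1 / (b * c)) *\<^sub>R (w - p)) (z - b *\<^sub>R p) \<le> t - real_of_ereal (f (b *\<^sub>R p))"
    using c by (rule mult_left_le_imp_le)
qed

lemma prox_scaled_monotone:
  fixes f :: "'a::euclidean_space \<Rightarrow> ereal" and s :: real and u w :: 'a
  assumes pr: "proper_fun f" and cv: "ereal_convex f" and ls: "lsc f" and s: "s > 0"
  defines "v1 \<equiv> (1 / s) *\<^sub>R (u - prox (\<lambda>z. ereal s * f z) u)"
    and "v2 \<equiv> w - prox (\<lambda>z. ereal (1 / s) * f (s *\<^sub>R z)) w"
  shows "norm (v1 - v2)^2 \<le> inner (v1 - v2) ((1 / s) *\<^sub>R (u - s *\<^sub>R w))"
proof -
  define p where "p = prox (\<lambda>z. ereal s * f z) u"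
  define P where "P = s *\<^sub>R prox (\<lambda>z. ereal (1 / s) * f (s *\<^sub>R z)) w"
  \<comment> \<open>v1 is a subgradient of f at p and v2 one at P, and subgradients of a convex function are monotone.\<close>
  note sub1 = prox_scaled_subgradient[OF pr cv ls s zero_less_one, where w = u, simplified]
  have "1 / s > 0" using s by simp
  note sub2 = prox_scaled_subgradient[OF pr cv ls this s, where w = w, simplified]
  obtain F1 F2 where F1: "f p = ereal F1" and F2: "f P = ereal F2"
    using sub1(1) sub2(1) s unfolding p_def P_def by metis
  have "inner v1 (P - p) \<le> F2 - F1"
    using sub1(2)[OF F2] F1 unfolding v1_def p_def[symmetric] by simp
  moreover have "inner v2 (p - P) \<le> F1 - F2"
    using sub2(2)[OF F1] F2 s unfolding v2_def P_def[symmetric] by simp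
  ultimately have "inner (v1 - v2) (p - P) \<ge> 0" by (simp add: inner_diff_left inner_diff_right)
  moreover have "p - P = (u - s *\<^sub>R w) - s *\<^sub>R (v1 - v2)"
    unfolding v1_def v2_def P_def p_def using s by (simp add: algebra_simps)
  ultimately have "s * norm (v1 - v2)^2 \<le> inner (v1 - v2) (u - s *\<^sub>R w)"
    by (simp add: inner_diff_right power2_norm_eq_inner)
  then have "norm (v1 - v2)^2 \<le> (1 / s) * inner (v1 - v2) (u - s *\<^sub>R w)"
    using s by (simp add: field_simps)
  then show ?thesis by simp
qed

section \<open>Spectral bounds for B B^T\<close>

lemma inner_matrix_vector_mult:
  fixes B :: "real^'d^'m"
  shows "inner (B *v x) y = inner x (transpose B *v y)"
  by (metis dot_lmul_matrix vector_transpose_matrix)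

lemma inner_BBt_self:
  fixes B :: "real^'d^'m"
  shows "inner u ((B ** transpose B) *v u) = norm (transpose B *v u)^2"
  by (simp add: matrix_vector_mul_assoc[symmetric] inner_commute[of u] inner_matrix_vector_mult
      power2_norm_eq_inner)

lemma inner_BBt_sym:
  fixes B :: "real^'d^'m"
  shows "inner x ((B ** transpose B) *v y) = inner ((B ** transpose B) *v x) y"
  by (simp add: matrix_vector_mul_assoc[symmetric] inner_commute[of x] inner_matrix_vector_mult)
    (simp add: inner_commute)

lemma symmetric_eigvals_finite:
  fixes A :: "real^'n^'n"
  assumes sym: "\<And>x y. inner x (A *v y) = inner (A *v x) y"
  shows "finite (eigvals A)"
proof (rule ccontr)
  assume "infinite (eigvals A)"
  then obtain F where F: "finite F" "card F = CARD('n) + 1" "F \<subseteq> eigvals A"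
    using infinite_arbitrarily_large by blast
  define ev where "ev \<mu> = (SOME x. x \<noteq> 0 \<and> A *v x = \<mu> *\<^sub>R x)" for \<mu>
  have ev: "ev \<mu> \<noteq> 0 \<and> A *v ev \<mu> = \<mu> *\<^sub>R ev \<mu>" if "\<mu> \<in> eigvals A" for \<mu>
    using that unfolding eigvals_def ev_def by (metis (mono_tags, lifting) mem_Collect_eq someI_ex)
  have orth: "inner (ev \<mu>) (ev \<eta>) = 0" if "\<mu> \<in> F" "\<eta> \<in> F" "\<mu> \<noteq> \<eta>" for \<mu> \<eta>
  proof -
    have "\<mu> * inner (ev \<mu>) (ev \<eta>) = inner (A *v ev \<mu>) (ev \<eta>)" using ev that F(3) by auto
    also have "\<dots> = \<eta> * inner (ev \<mu>) (ev \<eta>)" using ev that F(3) sym by (metis inner_scaleR_right subsetD)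
    finally show ?thesis using that(3) by simp
  qed
  have inj: "inj_on ev F"
    by (rule inj_onI) (metis F(3) ev inner_eq_zero_iff orth subsetD)
  have "pairwise orthogonal (ev ` F)"
    unfolding pairwise_def orthogonal_def using orth by blast
  moreover have "0 \<notin> ev ` F" using ev F(3) by auto
  ultimately have "independent (ev ` F)" by (rule pairwise_orthogonal_independent)
  then have "card (ev ` F) \<le> CARD('n)" using independent_bound[of "ev ` F"] by simp
  then show False using card_image[OF inj] F(2) by simp
qed

text \<open>\<psi> u = inner u (L u) - \<mu> norm u^2 is nonnegative and vanishes at e; moving from e along
  h = L e - \<mu> e lowers it to first order by 2 t norm h^2, so h = 0.\<close>
lemma self_adjoint_rayleigh_min_eigenvector:
  fixes L :: "'a::real_inner \<Rightarrow> 'a"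
  assumes lin: "linear L" and sym: "\<And>x y. inner x (L y) = inner (L x) y"
    and lb: "\<And>u. \<mu> * norm u^2 \<le> inner u (L u)" and eq: "inner e (L e) = \<mu> * norm e^2"
  shows "L e = \<mu> *\<^sub>R e"
proof -
  define h where "h = L e - \<mu> *\<^sub>R e"
  define \<psi> where "\<psi> u = inner u (L u) - \<mu> * norm u^2" for u
  have \<psi>0: "\<psi> u \<ge> 0" for u using lb[of u] unfolding \<psi>_def by simp
  have expand: "\<psi> (e - t *\<^sub>R h) = - 2 * t * inner h h + t^2 * \<psi> h" for t
  proof -
    have Ld: "L (e - t *\<^sub>R h) = L e - t *\<^sub>R L h" using lin by (simp add: linear_diff linear_scale)
    have "inner e (L h) = inner h (L e)" using sym[of e h] by (simp add: inner_commute)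
    then have "\<psi> (e - t *\<^sub>R h) = \<psi> e - 2 * t * (inner h (L e) - \<mu> * inner e h) + t^2 * \<psi> h"
      unfolding \<psi>_def Ld power2_norm_diff
      by (simp add: inner_diff_left inner_diff_right power2_eq_square algebra_simps)
    moreover have "inner h h = inner h (L e) - \<mu> * inner e h"
      unfolding h_def by (simp add: inner_diff_left inner_diff_right inner_commute right_diff_distrib)
    ultimately show ?thesis using eq unfolding \<psi>_def by simp
  qed
  have "2 * inner h h \<le> t * \<psi> h" if "0 < t" for t
    using \<psi>0[of "e - t *\<^sub>R h"] that unfolding expand by (simp add: power2_eq_square)
  moreover have "((\<lambda>t. t * \<psi> h) \<longlongrightarrow> 0) (at_right 0)" by (auto intro!: tendsto_eq_intros)
  ultimately have "2 * inner h h \<le> 0"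
    by (intro tendsto_lowerbound) (auto simp: eventually_at_right_field intro!: exI[of _ 1])
  then have "h = 0" by (metis inner_gt_zero_iff mult_le_0_iff not_le zero_less_numeral)
  then show ?thesis unfolding h_def by simp
qed

lemma power2_norm_matrix_vector_normalize:
  fixes A :: "real^'n^'m"
  shows "norm (A *v u)^2 = norm u^2 * norm (A *v ((1 / norm u) *\<^sub>R u))^2"
  by (cases "u = 0") (simp_all add: matrix_vector_mult_scaleR power_mult_distrib power_divide)

lemma rho_min_BBt_le:
  fixes B :: "real^'d^'m"
  shows "rho_min (B ** transpose B) * norm u^2 \<le> norm (transpose B *v u)^2"
proof -
  define Q where "Q u = norm (transpose B *v u)^2" for u :: "real^'m"
  have "sphere (0::real^'m) 1 \<noteq> {}"
    using nonempty_Basis norm_Basis by (metis (mono_tags) all_not_in_conv mem_sphere_0)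
  moreover have "continuous_on (sphere 0 1) Q" unfolding Q_def by (intro continuous_intros)
  ultimately obtain e where e: "norm e = 1" "\<And>y. norm y = 1 \<Longrightarrow> Q e \<le> Q y"
    using continuous_attains_inf[OF compact_sphere] by (metis mem_sphere_0)
  have lower: "Q e * norm v^2 \<le> Q v" for v
    using e(2)[of "(1 / norm v) *\<^sub>R v"] unfolding Q_def power2_norm_matrix_vector_normalize[of _ v]
    by (cases "v = 0") (simp_all add: mult.commute)
  have "(B ** transpose B) *v e = Q e *\<^sub>R e"
    by (rule self_adjoint_rayleigh_min_eigenvector)
      (use lower e(1) in \<open>auto simp: inner_BBt_self inner_BBt_sym matrix_vector_mul_linear Q_def\<close>)
  then have "Q e \<in> eigvals (B ** transpose B)"
    unfolding eigvals_def using e(1) by (intro CollectI exI[of _ e]) auto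
  then have "rho_min (B ** transpose B) \<le> Q e"
    unfolding rho_min_def by (simp add: symmetric_eigvals_finite inner_BBt_sym)
  then show ?thesis using lower[of u] unfolding Q_def by (meson mult_right_mono order_trans zero_le_power2)
qed

lemma norm_transpose_le_rho_max:
  fixes B :: "real^'d^'m"
  shows "norm (transpose B *v u)^2 \<le> rho_max (B ** transpose B) * norm u^2"
proof -
  define Q where "Q u = norm (transpose B *v u)^2" for u :: "real^'m"
  have "sphere (0::real^'m) 1 \<noteq> {}"
    using nonempty_Basis norm_Basis by (metis (mono_tags) all_not_in_conv mem_sphere_0)
  moreover have "continuous_on (sphere 0 1) Q" unfolding Q_def by (intro continuous_intros)
  ultimately obtain e where e: "norm e = 1" "\<And>y. norm y = 1 \<Longrightarrow> Q y \<le> Q e"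
    using continuous_attains_sup[OF compact_sphere] by (metis mem_sphere_0)
  have upper: "Q v \<le> Q e * norm v^2" for v
    using e(2)[of "(1 / norm v) *\<^sub>R v"] unfolding Q_def power2_norm_matrix_vector_normalize[of _ v]
    by (cases "v = 0") (simp_all add: mult.commute)
  have "- ((B ** transpose B) *v e) = (- Q e) *\<^sub>R e"
    by (rule self_adjoint_rayleigh_min_eigenvector)
      (use upper e(1) in \<open>auto simp: inner_BBt_self inner_BBt_sym linear_compose_neg
        matrix_vector_mul_linear Q_def\<close>)
  then have "Q e \<in> eigvals (B ** transpose B)"
    unfolding eigvals_def using e(1) by (intro CollectI exI[of _ e]) (auto simp: minus_equation_iff)
  then have "Q e \<le> rho_max (B ** transpose B)"
    unfolding rho_max_def by (simp add: symmetric_eigvals_finite inner_BBt_sym)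
  then show ?thesis using upper[of u] unfolding Q_def by (meson mult_right_mono order_trans zero_le_power2)
qed

section \<open>One primal-dual iteration\<close>

lemma scaled_norm_transpose_le:
  fixes B :: "real^'d^'m"
  assumes lam: "0 < lam" "lam < 1 / rho_max (B ** transpose B)"
  shows "lam * norm (transpose B *v u)^2 \<le> norm u^2"
proof -
  let ?\<rho> = "rho_max (B ** transpose B)"
  have "?\<rho> > 0"
  proof (rule ccontr)
    assume "\<not> ?\<rho> > 0"
    then have "1 / ?\<rho> \<le> 0" by (simp add: divide_le_0_iff)
    then show False using lam by linarith
  qed
  then have "lam * ?\<rho> \<le> 1" using lam by (simp add: field_simps)
  have "lam * norm (transpose B *v u)^2 \<le> lam * (?\<rho> * norm u^2)"
    using norm_transpose_le_rho_max lam(1) by (intro mult_left_mono) auto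
  also have "\<dots> = (lam * ?\<rho>) * norm u^2" by simp
  also have "\<dots> \<le> 1 * norm u^2" using \<open>lam * ?\<rho> \<le> 1\<close> by (intro mult_right_mono) auto
  finally show ?thesis by simp
qed

lemma mat_1_minus_BBt_mult:
  fixes B :: "real^'d^'m"
  shows "(mat 1 - lam *\<^sub>R (B ** transpose B)) *v y = y - lam *\<^sub>R (B *v (transpose B *v y))"
  by (simp add: matrix_vector_mult_diff_rdistrib scaleR_matrix_vector_assoc[symmetric]
      matrix_vector_mul_assoc[symmetric])

text \<open>Rescaling the dual variable by \<gamma> / lam turns both v' and vs into proximal residuals of
  rescalings of f, so that prox_scaled_monotone applies.\<close>
lemma dual_update_le:
  fixes f :: "real^'m \<Rightarrow> ereal" and B :: "real^'d^'m" and xs xh G :: "real^'d" and vs v :: "real^'m"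
  assumes pr: "proper_fun f" and cv: "ereal_convex f" and ls: "lsc f" and g: "\<gamma> > 0" and l: "lam > 0"
  defines "w \<equiv> (lam / \<gamma>) *\<^sub>R (B *v (xs - \<gamma> *\<^sub>R G)) + (mat 1 - lam *\<^sub>R (B ** transpose B)) *v vs"
  assumes vs_fix: "vs = w - prox (\<lambda>z. ereal (lam / \<gamma>) * f ((\<gamma> / lam) *\<^sub>R z)) w"
  defines "u \<equiv> B *v xh + (mat 1 - lam *\<^sub>R (B ** transpose B)) *v ((\<gamma> / lam) *\<^sub>R v)"
  defines "v' \<equiv> (lam / \<gamma>) *\<^sub>R (u - prox (\<lambda>z. ereal (\<gamma> / lam) * f z) u)"
  shows "norm (v' - vs)^2 \<le> lam / \<gamma> * inner (xh - (xs - \<gamma> *\<^sub>R G)) (transpose B *v (v' - vs))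
           + inner (v' - vs) (v - vs) - lam * inner (transpose B *v (v' - vs)) (transpose B *v (v - vs))"
proof -
  define s where "s = \<gamma> / lam"
  have s0: "s > 0" unfolding s_def using g l by simp
  have ls_inv: "lam / \<gamma> = 1 / s" unfolding s_def by simp
  define A where "A y = y - lam *\<^sub>R (B *v (transpose B *v y))" for y
  have Aeq: "(mat 1 - lam *\<^sub>R (B ** transpose B)) *v y = A y" for y
    unfolding A_def by (rule mat_1_minus_BBt_mult)
  have vs_eq: "w - prox (\<lambda>z. ereal (1 / s) * f (s *\<^sub>R z)) w = vs"
    using vs_fix unfolding ls_inv s_def[symmetric] by simp
  have v'_eq: "(1 / s) *\<^sub>R (u - prox (\<lambda>z. ereal s * f z) u) = v'"
    unfolding v'_def ls_inv s_def[symmetric] ..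
  define a where "a = v' - vs"
  define d where "d = v - vs"
  define D where "D = xh - (xs - \<gamma> *\<^sub>R G)"
  have "norm a^2 \<le> inner a ((1 / s) *\<^sub>R (u - s *\<^sub>R w))"
    using prox_scaled_monotone[OF pr cv ls s0, of u w] unfolding a_def vs_eq v'_eq .
  also have "(1 / s) *\<^sub>R (u - s *\<^sub>R w) = (1 / s) *\<^sub>R (B *v D) + A d"
    unfolding u_def w_def D_def d_def Aeq ls_inv A_def s_def[symmetric] using s0
    by (simp add: algebra_simps matrix_vector_mult_diff_distrib)
  also have "inner a ((1 / s) *\<^sub>R (B *v D) + A d)
      = (1 / s) * inner D (transpose B *v a) + inner a d - lam * inner (transpose B *v a) (transpose B *v d)"
    unfolding A_def
    by (simp add: inner_add_right inner_diff_right inner_commute[of a] inner_matrix_vector_mult)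
      (simp add: inner_commute)
  finally show ?thesis unfolding a_def d_def D_def ls_inv .
qed

lemma primal_dual_update_le:
  fixes f :: "real^'m \<Rightarrow> ereal" and B :: "real^'d^'m" and xs xh G :: "real^'d" and vs v :: "real^'m"
  assumes pr: "proper_fun f" and cv: "ereal_convex f" and ls: "lsc f"
    and g: "\<gamma> > 0" and l: "0 < lam" "lam < 1 / rho_max (B ** transpose B)"
  defines "w \<equiv> (lam / \<gamma>) *\<^sub>R (B *v (xs - \<gamma> *\<^sub>R G)) + (mat 1 - lam *\<^sub>R (B ** transpose B)) *v vs"
  assumes vs_fix: "vs = w - prox (\<lambda>z. ereal (lam / \<gamma>) * f ((\<gamma> / lam) *\<^sub>R z)) w"
    and xs_fix: "xs = xs - \<gamma> *\<^sub>R G - \<gamma> *\<^sub>R (transpose B *v vs)"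
  defines "u \<equiv> B *v xh + (mat 1 - lam *\<^sub>R (B ** transpose B)) *v ((\<gamma> / lam) *\<^sub>R v)"
  defines "v' \<equiv> (lam / \<gamma>) *\<^sub>R (u - prox (\<lambda>z. ereal (\<gamma> / lam) * f z) u)"
  defines "x' \<equiv> xh - \<gamma> *\<^sub>R (transpose B *v v')"
  shows "norm (x' - xs)^2 + \<gamma>^2 / lam * norm (v' - vs)^2
         \<le> norm (xh - (xs - \<gamma> *\<^sub>R G))^2
            + \<gamma>^2 / lam * (norm (v - vs)^2 - lam * norm (transpose B *v (v - vs))^2)"
proof -
  define Bt where "Bt = transpose B"
  define a where "a = v' - vs"
  define d where "d = v - vs"
  define D where "D = xh - (xs - \<gamma> *\<^sub>R G)"
  have dual: "norm a^2 \<le> lam / \<gamma> * inner D (Bt *v a) + inner a d - lam * inner (Bt *v a) (Bt *v d)"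
    unfolding a_def d_def D_def Bt_def v'_def u_def
    by (rule dual_update_le[OF pr cv ls g l(1) vs_fix[unfolded w_def]])
  have "x' - xs = xh - \<gamma> *\<^sub>R (Bt *v v') - ((xs - \<gamma> *\<^sub>R G) - \<gamma> *\<^sub>R (Bt *v vs))"
    using xs_fix unfolding x'_def Bt_def by (metis diff_diff_eq)
  also have "\<dots> = D - \<gamma> *\<^sub>R (Bt *v a)"
    unfolding D_def a_def by (simp add: matrix_vector_mult_diff_distrib algebra_simps)
  finally have x'_eq: "x' - xs = D - \<gamma> *\<^sub>R (Bt *v a)" .
  \<comment> \<open>The first bracket is the dual inequality, the second scaled_norm_transpose_le at a - d.\<close>
  have "norm (x' - xs)^2 + \<gamma>^2 / lam * norm a^2
      = norm D^2 + \<gamma>^2 / lam * (norm d^2 - lam * norm (Bt *v d)^2)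
        + \<gamma>^2 / lam * (2 * (norm a^2 - (lam / \<gamma> * inner D (Bt *v a) + inner a d
                                         - lam * inner (Bt *v a) (Bt *v d)))
                        + (lam * norm (Bt *v (a - d))^2 - norm (a - d)^2))"
    (is "_ = ?R + \<gamma>^2 / lam * ?Q")
    using g l unfolding x'_eq matrix_vector_mult_diff_distrib power2_norm_diff
    by (simp add: inner_commute[of "Bt *v d"] inner_commute[of d] power_mult_distrib
        power2_eq_square field_simps)
  also have "\<dots> \<le> ?R"
  proof -
    have "?Q \<le> 0" using dual scaled_norm_transpose_le[OF l, of "a - d"] unfolding Bt_def by argo
    then have "\<gamma>^2 / lam * ?Q \<le> 0" using l by (intro mult_nonneg_nonpos) auto
    then show ?thesis by linarith
  qed
  finally show ?thesis unfolding a_def d_def D_def Bt_def by linarith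
qed

lemma dual_potential_contraction:
  fixes B :: "real^'d^'m"
  assumes l: "0 < lam" and spec: "\<nu> * \<gamma> \<le> lam * rho_min (B ** transpose B)"
  shows "\<gamma>^2 / lam * (norm u^2 - lam * norm (transpose B *v u)^2) \<le> (1 - \<nu> * \<gamma>) * (\<gamma>^2 / lam * norm u^2)"
proof -
  have "\<nu> * \<gamma> * norm u^2 \<le> lam * (rho_min (B ** transpose B) * norm u^2)"
    using spec by (simp add: mult_right_mono flip: mult.assoc)
  also have "\<dots> \<le> lam * norm (transpose B *v u)^2"
    using rho_min_BBt_le l by (intro mult_left_mono) auto
  finally have "norm u^2 - lam * norm (transpose B *v u)^2 \<le> (1 - \<nu> * \<gamma>) * norm u^2"
    by (simp add: algebra_simps)
  then have "\<gamma>^2 / lam * (norm u^2 - lam * norm (transpose B *v u)^2) \<le> \<gamma>^2 / lam * ((1 - \<nu> * \<gamma>) * norm u^2)"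
    using l by (intro mult_left_mono) auto
  then show ?thesis by (simp add: mult.left_commute)
qed

lemma alg1_step_potential_le:
  fixes f :: "real^'m \<Rightarrow> ereal" and B :: "real^'d^'m" and gphi :: "nat \<Rightarrow> real^'d \<Rightarrow> real^'d"
    and x xs G :: "real^'d" and v vs :: "real^'m" and c \<alpha> lam \<gamma>' :: real and k :: nat
  defines "\<gamma> \<equiv> gamma c \<alpha> k"
  defines "w \<equiv> (lam / \<gamma>) *\<^sub>R (B *v (xs - \<gamma> *\<^sub>R G)) + (mat 1 - lam *\<^sub>R (B ** transpose B)) *v vs"
  assumes pr: "proper_fun f" and cv: "ereal_convex f" and ls: "lsc f"
    and g: "\<gamma> > 0" and l: "0 < lam" "lam < 1 / rho_max (B ** transpose B)"
    and vs_fix: "vs = w - prox (\<lambda>z. ereal (lam / \<gamma>) * f ((\<gamma> / lam) *\<^sub>R z)) w"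
    and xs_fix: "xs = xs - \<gamma> *\<^sub>R G - \<gamma> *\<^sub>R (transpose B *v vs)"
    and spec: "\<nu> * \<gamma> \<le> lam * rho_min (B ** transpose B)"
    and g': "\<bar>\<gamma>'\<bar> \<le> \<gamma>"
  shows "norm (fst (alg1_step f B gphi p \<nu> lam c \<alpha> k i (x, v)) - xs)^2
           + \<gamma>'^2 / lam * norm (snd (alg1_step f B gphi p \<nu> lam c \<alpha> k i (x, v)) - vs)^2
         \<le> norm ((x - xs) - \<gamma> *\<^sub>R (grad_l_batch gphi p i x + \<nu> *\<^sub>R x - G))^2
           + (1 - \<nu> * \<gamma>) * (\<gamma>^2 / lam * norm (v - vs)^2)"
proof -
  define xh where "xh = x - \<gamma> *\<^sub>R (grad_l_batch gphi p i x + \<nu> *\<^sub>R x)"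
  define u where "u = B *v xh + (mat 1 - lam *\<^sub>R (B ** transpose B)) *v ((\<gamma> / lam) *\<^sub>R v)"
  define v' where "v' = (lam / \<gamma>) *\<^sub>R (u - prox (\<lambda>z. ereal (\<gamma> / lam) * f z) u)"
  define x' where "x' = xh - \<gamma> *\<^sub>R (transpose B *v v')"
  have step: "alg1_step f B gphi p \<nu> lam c \<alpha> k i (x, v) = (x', v')"
    unfolding alg1_step_def Let_def x'_def v'_def u_def xh_def \<gamma>_def by simp
  have "\<gamma>'^2 \<le> \<gamma>^2" using power_mono[OF g' abs_ge_zero, of 2] by simp
  then have "\<gamma>'^2 / lam * norm (v' - vs)^2 \<le> \<gamma>^2 / lam * norm (v' - vs)^2"
    using l by (intro mult_right_mono divide_right_mono) auto
  moreover have "norm (x' - xs)^2 + \<gamma>^2 / lam * norm (v' - vs)^2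
      \<le> norm (xh - (xs - \<gamma> *\<^sub>R G))^2
        + \<gamma>^2 / lam * (norm (v - vs)^2 - lam * norm (transpose B *v (v - vs))^2)"
    unfolding x'_def v'_def u_def by (rule primal_dual_update_le[OF pr cv ls g l vs_fix[unfolded w_def] xs_fix])
  moreover have "xh - (xs - \<gamma> *\<^sub>R G) = (x - xs) - \<gamma> *\<^sub>R (grad_l_batch gphi p i x + \<nu> *\<^sub>R x - G)"
    unfolding xh_def by (simp add: algebra_simps)
  moreover have "\<gamma>^2 / lam * (norm (v - vs)^2 - lam * norm (transpose B *v (v - vs))^2)
      \<le> (1 - \<nu> * \<gamma>) * (\<gamma>^2 / lam * norm (v - vs)^2)"
    by (rule dual_potential_contraction[OF l(1) spec])
  ultimately show ?thesis unfolding step by simp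
qed

section \<open>Stochastic gradients\<close>

lemma convex_on_has_derivative_ge:
  fixes \<phi> :: "'a::real_normed_vector \<Rightarrow> real"
  assumes cv: "convex_on UNIV \<phi>" and d: "(\<phi> has_derivative g) (at x)"
  shows "\<phi> y \<ge> \<phi> x + g (y - x)"
proof -
  define \<psi> where "\<psi> t = \<phi> (x + t *\<^sub>R (y - x))" for t :: real
  have "convex_on UNIV \<psi>"
  proof (rule convex_onI)
    fix t a b :: real assume t: "0 < t" "t < 1"
    have "x + ((1 - t) *\<^sub>R a + t *\<^sub>R b) *\<^sub>R (y - x)
        = (1 - t) *\<^sub>R (x + a *\<^sub>R (y - x)) + t *\<^sub>R (x + b *\<^sub>R (y - x))"
      by (simp add: algebra_simps)
    then show "\<psi> ((1 - t) *\<^sub>R a + t *\<^sub>R b) \<le> (1 - t) * \<psi> a + t * \<psi> b"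
      unfolding \<psi>_def using convex_onD[OF cv, of t] t by simp
  qed simp
  moreover have "(\<psi> has_field_derivative g (y - x)) (at 0)"
  proof -
    have "((\<lambda>t. x + t *\<^sub>R (y - x)) has_derivative (\<lambda>h. h *\<^sub>R (y - x))) (at 0)"
      by (auto intro!: derivative_eq_intros)
    from diff_chain_at[OF this] d
    have "(\<psi> has_derivative (g \<circ> (\<lambda>h. h *\<^sub>R (y - x)))) (at 0)" unfolding \<psi>_def comp_def by simp
    moreover have "g \<circ> (\<lambda>h. h *\<^sub>R (y - x)) = (\<lambda>h. g (y - x) * h)"
      using has_derivative_linear[OF d] by (auto simp: fun_eq_iff linear_scale)
    ultimately have "(\<psi> has_derivative (\<lambda>h. g (y - x) * h)) (at 0)" by simp
    then show ?thesis unfolding has_field_derivative_def by simp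
  qed
  ultimately have "\<psi> 1 - \<psi> 0 \<ge> g (y - x) * (1 - 0)"
    by (intro convex_on_imp_above_tangent) auto
  then show ?thesis unfolding \<psi>_def by simp
qed

lemma inner_grad_l_mono:
  fixes gphi :: "nat \<Rightarrow> real^'d \<Rightarrow> real^'d" and phi :: "nat \<Rightarrow> real^'d \<Rightarrow> real"
  assumes phi_grad: "\<And>j x. j \<in> {1..n} \<Longrightarrow> (phi j has_derivative (\<lambda>h. gphi j x \<bullet> h)) (at x)"
    and phi_convex: "\<And>j. j \<in> {1..n} \<Longrightarrow> convex_on UNIV (phi j)"
  shows "inner (x - y) (grad_l gphi n x - grad_l gphi n y) \<ge> 0"
proof -
  have "inner (x - y) (gphi j x - gphi j y) \<ge> 0" if j: "j \<in> {1..n}" for j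
    using convex_on_has_derivative_ge[OF phi_convex[OF j] phi_grad[OF j], of x y]
      convex_on_has_derivative_ge[OF phi_convex[OF j] phi_grad[OF j], of y x]
    by (simp add: inner_diff_left inner_diff_right inner_commute)
  then have "(1 / real n) * (\<Sum>j=1..n. inner (x - y) (gphi j x - gphi j y)) \<ge> 0"
    by (intro mult_nonneg_nonneg sum_nonneg) auto
  then show ?thesis
    unfolding grad_l_def by (simp add: inner_diff_right inner_sum_right sum_subtractf diff_divide_distrib)
qed

lemma sum_consecutive_blocks:
  fixes f :: "nat \<Rightarrow> 'a::comm_monoid_add"
  shows "(\<Sum>i=1..N. \<Sum>j=(i-1)*p+1..i*p. f j) = (\<Sum>j=1..N*p. f j)"
proof (induction N)
  case (Suc N)
  have "(\<Sum>j=1..N*p + p. f j) = (\<Sum>j=1..N*p. f j) + (\<Sum>j=N*p+1..N*p + p. f j)"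
    by (rule sum.ub_add_nat) simp
  then show ?case using Suc by (simp add: algebra_simps)
qed simp

lemma mean_grad_l_batch:
  fixes gphi :: "nat \<Rightarrow> real^'d \<Rightarrow> real^'d"
  assumes "n = N * p" "p > 0" "N > 0"
  shows "(1 / real N) *\<^sub>R (\<Sum>i=1..N. grad_l_batch gphi p i x) = grad_l gphi n x"
proof -
  have "(\<Sum>i=1..N. grad_l_batch gphi p i x) = (1 / real p) *\<^sub>R (\<Sum>j=1..n. gphi j x)"
    unfolding grad_l_batch_def assms(1) sum_consecutive_blocks[symmetric] by (simp add: scaleR_sum_right)
  then show ?thesis unfolding grad_l_def using assms by simp
qed

lemma norm_grad_l_batch_le:
  fixes gphi :: "nat \<Rightarrow> real^'d \<Rightarrow> real^'d"
  assumes C: "\<forall>j\<in>{1..n}. \<forall>x. norm (gphi j x) \<le> C" and n: "n = N * p" and p: "p > 0"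
    and i: "i \<in> {1..N}"
  shows "norm (grad_l_batch gphi p i x) \<le> C"
proof -
  define J where "J = {(i-1)*p+1..i*p}"
  have "card J = p" unfolding J_def using i by (cases i) auto
  moreover have "J \<subseteq> {1..n}" unfolding J_def using i n by (auto intro: order_trans)
  then have "(\<Sum>j\<in>J. norm (gphi j x)) \<le> real (card J) * C"
    using C by (intro sum_bounded_above) auto
  ultimately show ?thesis unfolding grad_l_batch_def J_def[symmetric] using p
    by (simp add: divide_le_eq order_trans[OF norm_sum] mult.commute)
qed

lemma norm_grad_l_batch_sq_le_SUP:
  fixes gphi :: "nat \<Rightarrow> real^'d \<Rightarrow> real^'d"
  assumes bdd: "\<exists>C. \<forall>j\<in>{1..n}. \<forall>x. norm (gphi j x) \<le> C" and n: "n = N * p" and p: "p > 0"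
    and i: "i \<in> {1..N}"
  shows "norm (grad_l_batch gphi p i x)^2 \<le> (SUP i\<in>{1..N}. SUP x. norm (grad_l_batch gphi p i x)^2)"
proof -
  obtain C where C: "\<forall>j\<in>{1..n}. \<forall>x. norm (gphi j x) \<le> C" using bdd by blast
  have "bdd_above (range (\<lambda>x. norm (grad_l_batch gphi p i x)^2))"
    using norm_grad_l_batch_le[OF C n p i] by (intro bdd_aboveI[of _ "C^2"]) (auto intro: power_mono)
  then have "norm (grad_l_batch gphi p i x)^2 \<le> (SUP x. norm (grad_l_batch gphi p i x)^2)"
    by (rule cSUP_upper[OF UNIV_I])
  also have "\<dots> \<le> (SUP i\<in>{1..N}. SUP x. norm (grad_l_batch gphi p i x)^2)"
    using i by (intro cSUP_upper) (auto intro: bdd_above_finite)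
  finally show ?thesis .
qed

lemma mean_norm_step_le:
  fixes e Gm :: "'a::real_inner" and Gi :: "nat \<Rightarrow> 'a" and N :: nat
  assumes N: "N > 0" and avg: "(1 / real N) *\<^sub>R (\<Sum>i=1..N. Gi i) = Gm"
    and mon: "\<nu> * norm e^2 \<le> inner e Gm"
    and bnd: "\<And>i. i \<in> {1..N} \<Longrightarrow> norm (Gi i)^2 \<le> M + 2 * \<nu>^2 * norm e^2"
    and g: "\<gamma> > 0" and g\<nu>: "\<gamma> * \<nu> \<le> 1/2" and \<nu>: "\<nu> > 0"
  shows "(1 / real N) * (\<Sum>i=1..N. norm (e - \<gamma> *\<^sub>R Gi i)^2) \<le> (1 - \<nu> * \<gamma>) * norm e^2 + \<gamma>^2 * M"
proof -
  have "(1 / real N) * (\<Sum>i=1..N. norm (e - \<gamma> *\<^sub>R Gi i)^2)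
      = norm e^2 - 2 * \<gamma> * inner e Gm + \<gamma>^2 * ((1 / real N) * (\<Sum>i=1..N. norm (Gi i)^2))"
    unfolding avg[symmetric] power2_norm_diff using N
    by (simp add: sum.distrib sum_subtractf inner_sum_right sum_distrib_left power_mult_distrib
        field_simps)
  also have "(1 / real N) * (\<Sum>i=1..N. norm (Gi i)^2) \<le> (1 / real N) * (\<Sum>i=1..N. M + 2 * \<nu>^2 * norm e^2)"
    using bnd by (intro mult_left_mono sum_mono) auto
  also have "\<dots> = M + 2 * \<nu>^2 * norm e^2" using N by simp
  finally have "(1 / real N) * (\<Sum>i=1..N. norm (e - \<gamma> *\<^sub>R Gi i)^2)
      \<le> norm e^2 - 2 * \<gamma> * inner e Gm + \<gamma>^2 * (M + 2 * \<nu>^2 * norm e^2)"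
    by (simp add: mult_left_mono)
  moreover have "2 * \<gamma> * (\<nu> * norm e^2) \<le> 2 * \<gamma> * inner e Gm" using mon g by simp
  moreover have "2 * \<gamma>^2 * \<nu>^2 * norm e^2 \<le> \<gamma> * \<nu> * norm e^2"
  proof -
    have "2 * (\<gamma> * \<nu>) * (\<gamma> * \<nu>) \<le> 1 * (\<gamma> * \<nu>)" using g\<nu> g \<nu> by (intro mult_right_mono) auto
    then show ?thesis by (intro mult_right_mono) (auto simp: power2_eq_square algebra_simps)
  qed
  ultimately show ?thesis by (simp add: algebra_simps)
qed

lemma mean_batch_step_le:
  fixes gphi :: "nat \<Rightarrow> real^'d \<Rightarrow> real^'d" and phi :: "nat \<Rightarrow> real^'d \<Rightarrow> real"
  assumes nN: "n = N * p" and p: "p > 0" and N: "N > 0"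
    and phi_grad: "\<And>j x. j \<in> {1..n} \<Longrightarrow> (phi j has_derivative (\<lambda>h. gphi j x \<bullet> h)) (at x)"
    and phi_convex: "\<And>j. j \<in> {1..n} \<Longrightarrow> convex_on UNIV (phi j)"
    and M: "\<And>i x. i \<in> {1..N} \<Longrightarrow> 4 * (norm (grad_l_batch gphi p i x)^2 + norm (grad_l gphi n xs)^2) \<le> M"
    and \<nu>: "\<nu> > 0" and g: "\<gamma> > 0" and g\<nu>: "\<gamma> * \<nu> \<le> 1/2"
  defines "gf2 \<equiv> \<lambda>x. grad_l gphi n x + \<nu> *\<^sub>R x"
  shows "(1 / real N) * (\<Sum>i=1..N. norm ((x - xs) - \<gamma> *\<^sub>R (grad_l_batch gphi p i x + \<nu> *\<^sub>R x - gf2 xs))^2)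
         \<le> (1 - \<nu> * \<gamma>) * norm (x - xs)^2 + \<gamma>^2 * M"
proof (rule mean_norm_step_le[OF N _ _ _ g g\<nu> \<nu>])
  show "(1 / real N) *\<^sub>R (\<Sum>i=1..N. grad_l_batch gphi p i x + \<nu> *\<^sub>R x - gf2 xs) = gf2 x - gf2 xs"
    using mean_grad_l_batch[OF nN p N, of gphi x] N
    by (simp del: sum_constant add: sum_constant_scaleR sum.distrib sum_subtractf scaleR_add_right
        scaleR_diff_right gf2_def)
  have "gf2 x - gf2 xs = (grad_l gphi n x - grad_l gphi n xs) + \<nu> *\<^sub>R (x - xs)"
    unfolding gf2_def by (simp add: algebra_simps)
  then show "\<nu> * norm (x - xs)^2 \<le> inner (x - xs) (gf2 x - gf2 xs)"
    using inner_grad_l_mono[OF phi_grad phi_convex, where x = x and y = xs]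
    by (simp add: inner_add_right power2_norm_eq_inner)
  fix i assume i: "i \<in> {1..N}"
  have "grad_l_batch gphi p i x + \<nu> *\<^sub>R x - gf2 xs
      = (grad_l_batch gphi p i x - grad_l gphi n xs) + \<nu> *\<^sub>R (x - xs)"
    unfolding gf2_def by (simp add: algebra_simps)
  also have "norm \<dots>^2 \<le> 2 * norm (grad_l_batch gphi p i x - grad_l gphi n xs)^2 + 2 * \<nu>^2 * norm (x - xs)^2"
    using power2_norm_add_le[of "grad_l_batch gphi p i x - grad_l gphi n xs" "\<nu> *\<^sub>R (x - xs)"]
    by (simp add: power_mult_distrib mult.assoc)
  also have "norm (grad_l_batch gphi p i x - grad_l gphi n xs)^2
      \<le> 2 * norm (grad_l_batch gphi p i x)^2 + 2 * norm (grad_l gphi n xs)^2"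
    using power2_norm_add_le[of "grad_l_batch gphi p i x" "- grad_l gphi n xs"] by simp
  finally show "norm (grad_l_batch gphi p i x + \<nu> *\<^sub>R x - gf2 xs)^2 \<le> M + 2 * \<nu>^2 * norm (x - xs)^2"
    using M[OF i, of x] by simp
qed

section \<open>Averaging over the sampled indices\<close>

lemma (in prob_space) prob_indep_uniform_sequence:
  fixes I :: "nat \<Rightarrow> 'a \<Rightarrow> nat"
  assumes ind: "indep_vars (\<lambda>_. count_space UNIV) I {1..}"
    and unif: "\<And>k i. k \<ge> 1 \<Longrightarrow> i \<in> {1..N} \<Longrightarrow> prob {\<omega> \<in> space M. I k \<omega> = i} = q"
    and J: "finite J" "J \<subseteq> {1..}" and s: "s \<in> PiE J (\<lambda>_. {1..N})"
  shows "{\<omega>\<in>space M. \<forall>j\<in>J. I j \<omega> = s j} \<in> events"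
    and "prob {\<omega>\<in>space M. \<forall>j\<in>J. I j \<omega> = s j} = q ^ card J"
proof -
  have "{\<omega>\<in>space M. I j \<omega> = i} \<in> sets M" if "j \<in> J" for i j
  proof -
    have "I j \<in> measurable M (count_space UNIV)" using ind J(2) that unfolding indep_vars_def2 by auto
    moreover have "{\<omega>\<in>space M. I j \<omega> = i} = I j -` {i} \<inter> space M" by auto
    ultimately show ?thesis by (simp add: measurable_sets)
  qed
  then show "{\<omega>\<in>space M. \<forall>j\<in>J. I j \<omega> = s j} \<in> events"
    using J(1) by (intro sets.sets_Collect_finite_All) auto
  show "prob {\<omega>\<in>space M. \<forall>j\<in>J. I j \<omega> = s j} = q ^ card J"
  proof (cases "J = {}")
    case True then show ?thesis by (simp add: prob_space)
  next
    case False
    then have "{\<omega>\<in>space M. \<forall>j\<in>J. I j \<omega> = s j} = (\<Inter>j\<in>J. I j -` {s j} \<inter> space M)" by auto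
    moreover have "prob (\<Inter>j\<in>J. I j -` {s j} \<inter> space M) = (\<Prod>j\<in>J. prob (I j -` {s j} \<inter> space M))"
      using ind J False unfolding indep_vars_def2 by (intro indep_setsD) auto
    moreover have "prob (I j -` {s j} \<inter> space M) = q" if j: "j \<in> J" for j
    proof -
      have "I j -` {s j} \<inter> space M = {\<omega> \<in> space M. I j \<omega> = s j}" by auto
      then show ?thesis using unif[of j "s j"] j J(2) PiE_mem[OF s j] by auto
    qed
    ultimately show ?thesis by simp
  qed
qed

lemma (in prob_space) integral_indep_uniform_indices:
  fixes I :: "nat \<Rightarrow> 'a \<Rightarrow> nat" and H :: "(nat \<Rightarrow> nat) \<Rightarrow> real"
  assumes ind: "indep_vars (\<lambda>_. count_space UNIV) I {1..}"
    and rng: "\<And>k \<omega>. k \<ge> 1 \<Longrightarrow> \<omega> \<in> space M \<Longrightarrow> I k \<omega> \<in> {1..N}"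
    and unif: "\<And>k i. k \<ge> 1 \<Longrightarrow> i \<in> {1..N} \<Longrightarrow> prob {\<omega> \<in> space M. I k \<omega> = i} = q"
    and J: "finite J" "J \<subseteq> {1..}"
  shows "(\<integral>\<omega>. H (restrict (\<lambda>j. I j \<omega>) J) \<partial>M) = q ^ card J * (\<Sum>s\<in>PiE J (\<lambda>_. {1..N}). H s)"
proof -
  define S where "S = PiE J (\<lambda>_. {1..N})"
  define A where "A s = {\<omega>\<in>space M. restrict (\<lambda>j. I j \<omega>) J = s}" for s
  have "finite S" unfolding S_def using J by (simp add: finite_PiE)
  have A_all: "A s = {\<omega>\<in>space M. \<forall>j\<in>J. I j \<omega> = s j}" if "s \<in> S" for s
    using that unfolding A_def S_def by (auto simp: restrict_def PiE_def extensional_def fun_eq_iff)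
  have A: "A s \<in> events" "prob (A s) = q ^ card J" if "s \<in> S" for s
    unfolding A_all[OF that]
    using prob_indep_uniform_sequence[where N = N, OF ind unif J that[unfolded S_def]] by auto
  have "H (restrict (\<lambda>j. I j \<omega>) J) = (\<Sum>s\<in>S. H s * indicator (A s) \<omega>)" if \<omega>: "\<omega> \<in> space M" for \<omega>
  proof -
    have "restrict (\<lambda>j. I j \<omega>) J \<in> S" unfolding S_def using rng \<omega> J(2) by auto
    then show ?thesis using \<open>finite S\<close> \<omega> by (simp add: A_def indicator_def if_distrib[of "\<lambda>y. _ * y"] sum.delta'
          flip: sum.inter_filter)
  qed
  then have "(\<integral>\<omega>. H (restrict (\<lambda>j. I j \<omega>) J) \<partial>M) = (\<integral>\<omega>. (\<Sum>s\<in>S. H s * indicator (A s) \<omega>) \<partial>M)"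
    by (intro Bochner_Integration.integral_cong) auto
  also have "\<dots> = (\<Sum>s\<in>S. H s * prob (A s))"
    using A(1) by (subst Bochner_Integration.integral_sum)
      (auto intro!: integrable_real_indicator simp: less_top[symmetric])
  finally show ?thesis using A(2) by (simp add: S_def sum_distrib_left mult.commute)
qed

lemma sum_PiE_insert:
  assumes "k \<notin> J"
  shows "(\<Sum>s\<in>PiE (insert k J) (\<lambda>_. T). H s) = (\<Sum>s\<in>PiE J (\<lambda>_. T). \<Sum>i\<in>T. H (s(k := i)))"
proof -
  have "(\<Sum>s\<in>PiE (insert k J) (\<lambda>_. T). H s) = (\<Sum>(i, s)\<in>T \<times> PiE J (\<lambda>_. T). H (s(k := i)))"
    unfolding PiE_insert_eq using inj_combinator[OF assms, of "\<lambda>_. T"]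
    by (simp add: sum.reindex case_prod_beta' comp_def)
  also have "\<dots> = (\<Sum>s\<in>PiE J (\<lambda>_. T). \<Sum>i\<in>T. H (s(k := i)))"
    by (simp add: sum.cartesian_product[symmetric] sum.swap[of _ T])
  finally show ?thesis .
qed

lemma alg1_cong:
  "(\<And>j. 1 \<le> j \<Longrightarrow> j < k \<Longrightarrow> idx j = idx' j) \<Longrightarrow>
   alg1 f B gphi p \<nu> lam c \<alpha> x1 v1 idx k = alg1 f B gphi p \<nu> lam c \<alpha> x1 v1 idx' k"
  by (induction f B gphi p \<nu> lam c \<alpha> x1 v1 idx k rule: alg1.induct) auto

text \<open>The k-th iterate only depends on the indices drawn before step k, whose joint law is uniform on
  index sequences; so an inequality for the average over the next index integrates to one between
  expectations.\<close>
lemma (in prob_space) integral_alg1_step_le: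
  fixes \<Phi> \<Psi> :: "(real^'d) \<times> (real^'m) \<Rightarrow> real" and I :: "nat \<Rightarrow> 'a \<Rightarrow> nat"
  assumes ind: "indep_vars (\<lambda>_. count_space UNIV) I {1..}"
    and rng: "\<And>k \<omega>. k \<ge> 1 \<Longrightarrow> \<omega> \<in> space M \<Longrightarrow> I k \<omega> \<in> {1..N}"
    and unif: "\<And>k i. k \<ge> 1 \<Longrightarrow> i \<in> {1..N} \<Longrightarrow> prob {\<omega> \<in> space M. I k \<omega> = i} = 1 / real N"
    and N: "N > 0" and k: "k \<ge> 1"
    and step: "\<And>z. (1 / real N) * (\<Sum>i=1..N. \<Psi> (alg1_step f B gphi p \<nu> lam c \<alpha> k i z)) \<le> a * \<Phi> z + b"
  shows "(\<integral>\<omega>. \<Psi> (alg1 f B gphi p \<nu> lam c \<alpha> x1 v1 (\<lambda>j. I j \<omega>) (k + 1)) \<partial>M)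
         \<le> a * (\<integral>\<omega>. \<Phi> (alg1 f B gphi p \<nu> lam c \<alpha> x1 v1 (\<lambda>j. I j \<omega>) k) \<partial>M) + b"
proof -
  define q where "q = 1 / real N"
  define X where "X s j = alg1 f B gphi p \<nu> lam c \<alpha> x1 v1 s j" for s j
  define S where "S j = PiE {1..<j::nat} (\<lambda>_. {1..N})" for j
  have X_restrict: "X (\<lambda>j. I j \<omega>) j = X (restrict (\<lambda>i. I i \<omega>) {1..<j}) j" for j \<omega>
    unfolding X_def by (rule alg1_cong) simp
  have E: "(\<integral>\<omega>. H (X (\<lambda>j. I j \<omega>) j) \<partial>M) = q ^ (j - 1) * (\<Sum>s\<in>S j. H (X s j))" for H j
    unfolding X_restrict S_def q_def
    using integral_indep_uniform_indices[OF ind rng unif, of "{1..<j}" "\<lambda>s. H (X s j)"]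
    by (simp add: subset_eq)
  have X_Suc: "X (s(k := i)) (k + 1) = alg1_step f B gphi p \<nu> lam c \<alpha> k i (X s k)" for s i
  proof -
    have "X (s(k := i)) k = X s k" unfolding X_def by (rule alg1_cong) simp
    then show ?thesis using k unfolding X_def by (cases k) auto
  qed
  have "(\<integral>\<omega>. \<Psi> (X (\<lambda>j. I j \<omega>) (k + 1)) \<partial>M)
      = q ^ (k - 1) * (\<Sum>s\<in>S k. q * (\<Sum>i=1..N. \<Psi> (alg1_step f B gphi p \<nu> lam c \<alpha> k i (X s k))))"
  proof -
    have "{1..<k + 1} = insert k {1..<k}" using k by auto
    then have "(\<Sum>s\<in>S (k + 1). \<Psi> (X s (k + 1))) = (\<Sum>s\<in>S k. \<Sum>i=1..N. \<Psi> (X (s(k := i)) (k + 1)))"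
      unfolding S_def by (simp add: sum_PiE_insert)
    then show ?thesis unfolding E X_Suc using k by (cases k) (simp_all add: sum_distrib_left mult_ac)
  qed
  also have "\<dots> \<le> q ^ (k - 1) * (\<Sum>s\<in>S k. a * \<Phi> (X s k) + b)"
    using step unfolding q_def by (intro mult_left_mono sum_mono) auto
  also have "\<dots> = a * (q ^ (k - 1) * (\<Sum>s\<in>S k. \<Phi> (X s k))) + b * (q ^ (k - 1) * real (card (S k)))"
    by (simp add: sum.distrib sum_distrib_left algebra_simps)
  also have "q ^ (k - 1) * real (card (S k)) = 1"
    unfolding S_def q_def using N by (simp add: card_PiE power_one_over)
  also have "q ^ (k - 1) * (\<Sum>s\<in>S k. \<Phi> (X s k)) = (\<integral>\<omega>. \<Phi> (X (\<lambda>j. I j \<omega>) k) \<partial>M)"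
    by (rule E[symmetric])
  finally show ?thesis unfolding X_def by simp
qed

lemma mean_alg1_step_potential_le:
  fixes f :: "real^'m \<Rightarrow> ereal" and B :: "real^'d^'m" and gphi :: "nat \<Rightarrow> real^'d \<Rightarrow> real^'d"
    and phi :: "nat \<Rightarrow> real^'d \<Rightarrow> real" and xs :: "real^'d" and vs :: "real^'m"
    and c \<alpha> \<nu> lam \<gamma>' :: real and k n :: nat
  defines "\<gamma> \<equiv> gamma c \<alpha> k" and "gf2 \<equiv> \<lambda>x. grad_l gphi n x + \<nu> *\<^sub>R x"
  defines "w \<equiv> (lam / \<gamma>) *\<^sub>R (B *v (xs - \<gamma> *\<^sub>R gf2 xs)) + (mat 1 - lam *\<^sub>R (B ** transpose B)) *v vs"
  assumes pr: "proper_fun f" and cv: "ereal_convex f" and ls: "lsc f"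
    and l: "0 < lam" "lam < 1 / rho_max (B ** transpose B)"
    and vs_fix: "vs = w - prox (\<lambda>z. ereal (lam / \<gamma>) * f ((\<gamma> / lam) *\<^sub>R z)) w"
    and xs_fix: "xs = xs - \<gamma> *\<^sub>R gf2 xs - \<gamma> *\<^sub>R (transpose B *v vs)"
    and g: "\<gamma> > 0" and g\<nu>: "\<gamma> * \<nu> \<le> 1/2" and spec: "\<nu> * \<gamma> \<le> lam * rho_min (B ** transpose B)"
    and g': "\<bar>\<gamma>'\<bar> \<le> \<gamma>"
    and nN: "n = N * p" and p: "p > 0" and N: "N > 0" and \<nu>: "\<nu> > 0"
    and phi_grad: "\<And>j x. j \<in> {1..n} \<Longrightarrow> (phi j has_derivative (\<lambda>h. gphi j x \<bullet> h)) (at x)"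
    and phi_convex: "\<And>j. j \<in> {1..n} \<Longrightarrow> convex_on UNIV (phi j)"
    and M: "\<And>i x. i \<in> {1..N} \<Longrightarrow> 4 * (norm (grad_l_batch gphi p i x)^2 + norm (grad_l gphi n xs)^2) \<le> M"
  shows "(1 / real N) * (\<Sum>i=1..N. norm (fst (alg1_step f B gphi p \<nu> lam c \<alpha> k i z) - xs)^2
            + \<gamma>'^2 / lam * norm (snd (alg1_step f B gphi p \<nu> lam c \<alpha> k i z) - vs)^2)
         \<le> (1 - \<nu> * \<gamma>) * (norm (fst z - xs)^2 + \<gamma>^2 / lam * norm (snd z - vs)^2) + \<gamma>^2 * M"
proof -
  obtain x v where z: "z = (x, v)" by fastforce
  define e where "e i = (x - xs) - \<gamma> *\<^sub>R (grad_l_batch gphi p i x + \<nu> *\<^sub>R x - gf2 xs)" for i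
  have "(1 / real N) * (\<Sum>i=1..N. norm (fst (alg1_step f B gphi p \<nu> lam c \<alpha> k i z) - xs)^2
            + \<gamma>'^2 / lam * norm (snd (alg1_step f B gphi p \<nu> lam c \<alpha> k i z) - vs)^2)
      \<le> (1 / real N) * (\<Sum>i=1..N. norm (e i)^2 + (1 - \<nu> * \<gamma>) * (\<gamma>^2 / lam * norm (v - vs)^2))"
    unfolding z e_def \<gamma>_def gf2_def using N
    by (intro mult_left_mono sum_mono alg1_step_potential_le[OF pr cv ls g[unfolded \<gamma>_def] l
          vs_fix[unfolded w_def \<gamma>_def gf2_def] xs_fix[unfolded \<gamma>_def gf2_def] spec[unfolded \<gamma>_def]
          g'[unfolded \<gamma>_def]]) auto
  also have "\<dots> = (1 / real N) * (\<Sum>i=1..N. norm (e i)^2) + (1 - \<nu> * \<gamma>) * (\<gamma>^2 / lam * norm (v - vs)^2)"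
    using N by (simp add: sum.distrib field_simps)
  also have "\<dots> \<le> (1 - \<nu> * \<gamma>) * norm (x - xs)^2 + \<gamma>^2 * M + (1 - \<nu> * \<gamma>) * (\<gamma>^2 / lam * norm (v - vs)^2)"
    using mean_batch_step_le[OF nN p N phi_grad phi_convex M \<nu> g g\<nu>] unfolding e_def gf2_def by simp
  finally show ?thesis unfolding z by (simp add: algebra_simps)
qed

lemma gamma_pos: "c > 0 \<Longrightarrow> k \<ge> 1 \<Longrightarrow> gamma c \<alpha> k > 0"
  unfolding gamma_def by simp

lemma gamma_antimono:
  assumes "c > 0" "\<alpha> > 0" "1 \<le> j" "j \<le> k"
  shows "gamma c \<alpha> k \<le> gamma c \<alpha> j"
  unfolding gamma_def using assms by (intro divide_left_mono powr_mono2 mult_pos_pos) auto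

theorem theorem4p4:
  fixes f1 :: "real^'m \<Rightarrow> ereal"
    and B :: "real^'d^'m"
    and phi :: "nat \<Rightarrow> real^'d \<Rightarrow> real"
    and gphi :: "nat \<Rightarrow> real^'d \<Rightarrow> real^'d"
    and n p :: nat
    and \<nu> M c \<alpha> lam :: real
    and xs x1 :: "real^'d"
    and vs v1 :: "real^'m"
    and k0 :: nat
    and P :: "'w measure"
    and I :: "nat \<Rightarrow> 'w \<Rightarrow> nat"
  defines "f2 \<equiv> (\<lambda>x. (1 / real n) * (\<Sum>j=1..n. phi j x) + \<nu> / 2 * norm x ^ 2)"
    and "gf2 \<equiv> (\<lambda>x. grad_l gphi n x + \<nu> *\<^sub>R x)"
    and "X \<equiv> (\<lambda>k \<omega>. alg1 f1 B gphi p \<nu> lam c \<alpha> x1 v1 (\<lambda>j. I j \<omega>) k)"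
  assumes f1_proper: "proper_fun f1" and f1_convex: "ereal_convex f1" and f1_lsc: "lsc f1"
    and B_rank: "rank B = CARD('m)"
    and n_pos: "0 < n" and p_pos: "0 < p" and p_dvd: "p dvd n"
    and \<nu>_pos: "\<nu> > 0"
    and phi_grad: "\<And>j x. j \<in> {1..n} \<Longrightarrow> (phi j has_derivative (\<lambda>h. gphi j x \<bullet> h)) (at x)"
    and phi_C1: "\<And>j. j \<in> {1..n} \<Longrightarrow> continuous_on UNIV (gphi j)"
    and phi_convex: "\<And>j. j \<in> {1..n} \<Longrightarrow> convex_on UNIV (phi j)"
    and grad_bdd: "\<exists>C. \<forall>j\<in>{1..n}. \<forall>x. norm (gphi j x) \<le> C"
    and M_bound: "4 * ((SUP i\<in>{1..n div p}. SUP x. norm (grad_l_batch gphi p i x) ^ 2)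
                        + norm (grad_l gphi n xs) ^ 2) \<le> M"
    and xs_min: "\<And>x. f1 (B *v xs) + ereal (f2 xs) \<le> f1 (B *v x) + ereal (f2 x)"
    and vs_fix1: "\<And>k. k \<ge> 1 \<Longrightarrow>
          vs = (let \<gamma> = gamma c \<alpha> k;
                    w = (lam / \<gamma>) *\<^sub>R (B *v (xs - \<gamma> *\<^sub>R gf2 xs))
                        + (mat 1 - lam *\<^sub>R (B ** transpose B)) *v vs
                in w - prox (\<lambda>z. ereal (lam / \<gamma>) * f1 ((\<gamma> / lam) *\<^sub>R z)) w)"
    and vs_fix2: "\<And>k. k \<ge> 1 \<Longrightarrow>
          xs = xs - gamma c \<alpha> k *\<^sub>R gf2 xs - gamma c \<alpha> k *\<^sub>R (transpose B *v vs)"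
    and c_pos: "c > 0" and \<alpha>_pos: "0 < \<alpha>" and \<alpha>_le: "\<alpha> \<le> 1"
    and lam_pos: "0 < lam" and lam_lt: "lam < 1 / rho_max (B ** transpose B)"
    and k0_pos: "k0 > 0"
    and k0_step: "gamma c \<alpha> k0 \<le> min (1 / (2 * \<nu>)) (lam * rho_min (B ** transpose B) / \<nu>)"
    and P_prob: "prob_space P"
    and I_indep: "prob_space.indep_vars P (\<lambda>_. count_space UNIV) I {1..}"
    and I_range: "\<And>k \<omega>. k \<ge> 1 \<Longrightarrow> \<omega> \<in> space P \<Longrightarrow> I k \<omega> \<in> {1..n div p}"
    and I_unif: "\<And>k i. k \<ge> 1 \<Longrightarrow> i \<in> {1..n div p} \<Longrightarrow>
                   measure P {\<omega> \<in> space P. I k \<omega> = i} = real p / real n"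
  shows "\<forall>k\<ge>k0.
     (\<integral>\<omega>. norm (fst (X (k+1) \<omega>) - xs)^2
            + (gamma c \<alpha> (k+1))^2 / lam * norm (snd (X (k+1) \<omega>) - vs)^2 \<partial>P)
     \<le> (1 - \<nu> * gamma c \<alpha> k) *
         (\<integral>\<omega>. norm (fst (X k \<omega>) - xs)^2
                + (gamma c \<alpha> k)^2 / lam * norm (snd (X k \<omega>) - vs)^2 \<partial>P)
       + (gamma c \<alpha> k)^2 * M"
proof (intro allI impI)
  fix k assume "k \<ge> k0"
  then have k: "k \<ge> 1" using k0_pos by simp
  let ?\<gamma> = "gamma c \<alpha> k"
  let ?\<Phi> = "\<lambda>j z. norm (fst z - xs)^2 + (gamma c \<alpha> j)^2 / lam * norm (snd z - vs)^2"
  define N where "N = n div p"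
  have nN: "n = N * p" and N: "N > 0" using p_dvd n_pos unfolding N_def by auto
  have "\<nu> * ?\<gamma> \<le> \<nu> * gamma c \<alpha> k0"
    using gamma_antimono c_pos \<alpha>_pos k0_pos \<open>k \<ge> k0\<close> \<nu>_pos by simp
  moreover have "\<nu> * gamma c \<alpha> k0 \<le> 1/2" "\<nu> * gamma c \<alpha> k0 \<le> lam * rho_min (B ** transpose B)"
    using k0_step \<nu>_pos by (auto simp: field_simps)
  ultimately have g\<nu>: "?\<gamma> * \<nu> \<le> 1/2" and spec: "\<nu> * ?\<gamma> \<le> lam * rho_min (B ** transpose B)"
    by (simp_all add: mult.commute)
  have g': "\<bar>gamma c \<alpha> (k + 1)\<bar> \<le> ?\<gamma>"
    using gamma_antimono gamma_pos c_pos \<alpha>_pos k by (simp add: less_imp_le)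
  have M: "4 * (norm (grad_l_batch gphi p i x)^2 + norm (grad_l gphi n xs)^2) \<le> M" if "i \<in> {1..N}" for i x
    using norm_grad_l_batch_sq_le_SUP[OF grad_bdd nN p_pos that, of x] M_bound unfolding N_def by simp
  have step: "(1 / real N) * (\<Sum>i=1..N. ?\<Phi> (k + 1) (alg1_step f1 B gphi p \<nu> lam c \<alpha> k i z))
        \<le> (1 - \<nu> * ?\<gamma>) * ?\<Phi> k z + ?\<gamma>^2 * M" for z
    by (rule mean_alg1_step_potential_le[OF f1_proper f1_convex f1_lsc lam_pos lam_lt
          vs_fix1[OF k, unfolded Let_def gf2_def] vs_fix2[OF k, unfolded gf2_def] gamma_pos[OF c_pos k]
          g\<nu> spec g' nN p_pos N \<nu>_pos phi_grad phi_convex M])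
  have unif: "measure P {\<omega> \<in> space P. I k \<omega> = i} = 1 / real N" if "k \<ge> 1" "i \<in> {1..N}" for k i
    using I_unif[OF that[unfolded N_def]] nN p_pos by simp
  show "(\<integral>\<omega>. ?\<Phi> (k + 1) (X (k + 1) \<omega>) \<partial>P) \<le> (1 - \<nu> * ?\<gamma>) * (\<integral>\<omega>. ?\<Phi> k (X k \<omega>) \<partial>P) + ?\<gamma>^2 * M"
    using prob_space.integral_alg1_step_le[OF P_prob I_indep I_range[folded N_def] unif N k step]
    unfolding X_def by simp
qed

end
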